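(* Let $k,\ell,m$ be integers with $k>\ell\ge1$ and $m\ge1$, and let $w=a^kba^\ell b^m$. For $n\ge1$ let $S_n = a^kba^\ell a^{k}b a^{\ell}b^{m} (a^k b^{m+1}a^\ell)^n a^{k}b a^{\ell}b^{m} b^m$. Then every $S_n$ belongs to $L^{\epsilon}_{\vdash_{\{w\}}}$ and for all $1\le i<j$, $S_i\not\vdash^*_{\{w\}} S_j$; in particular $\vdash^*_{\{w\}}$ is not a well quasi-order on $L^{\epsilon}_{\vdash_{\{w\}}}$.
   Context: For words $u,v$, the shuffle $u \sqcup\!\sqcup v$ is the set of all words $u_1v_1\cdots u_kv_k$ with $k\ge 1$, $u=u_1\cdots u_k$, $v=v_1\cdots v_k$ (pieces possibly empty). For a finite set $I$ of words, $v \vdash_I w$ means $w \in v \sqcup\!\sqcup u$ for some $u\in I$; $\vdash_I^*$ is its reflexive-transitive closure and $L^{\epsilon}_{\vdash_I}=\{w : \epsilon \vdash_I^* w\}$. A quasi-order $\le$ on $S$ is a well quasi-order iff every infinite sequence $s_1,s_2,\dots$ in $S$ has $i<j$ with $s_i\le s_j$. *)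

theory Defs
  imports Main
begin

definition shuffle :: "'a list \<Rightarrow> 'a list \<Rightarrow> 'a list set" where
  "shuffle u v = {w. \<exists>us vs. length us = length vs \<and> length us \<ge> 1 \<and>
      u = concat us \<and> v = concat vs \<and> w = concat (map2 (@) us vs)}"

definition ins_step :: "'a list set \<Rightarrow> 'a list \<Rightarrow> 'a list \<Rightarrow> bool" where
  "ins_step I v w \<longleftrightarrow> (\<exists>u\<in>I. w \<in> shuffle v u)"

abbreviation ins_star :: "'a list set \<Rightarrow> 'a list \<Rightarrow> 'a list \<Rightarrow> bool" where
  "ins_star I \<equiv> (ins_step I)\<^sup>*\<^sup>*"

definition lang_eps :: "'a list set \<Rightarrow> 'a list set" where
  "lang_eps I = {w. ins_star I [] w}"

text \<open>Well quasi-order on a set S (relation assumed a quasi-order): every infinite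
  sequence in S has i < j with s i <= s j.\<close>
definition wqo_on_set :: "('b \<Rightarrow> 'b \<Rightarrow> bool) \<Rightarrow> 'b set \<Rightarrow> bool" where
  "wqo_on_set le S \<longleftrightarrow> (\<forall>s::nat \<Rightarrow> 'b. (\<forall>n. s n \<in> S) \<longrightarrow> (\<exists>i j. i < j \<and> le (s i) (s j)))"

end

theory Submission
  imports Defs "HOL-Library.Sublist"
begin

text \<open>
  Colour each letter of a word of \<open>L\<^sup>\<epsilon>\<close> by the insertion step that produced it; then every
  colour class spells \<open>w\<close>. If \<open>S\<^sub>i \<turnstile>\<^sup>* S\<^sub>j\<close>, then \<open>S\<^sub>j\<close> carries such a colouring in which a
  set \<open>Q\<close> of colours spells \<open>S\<^sub>i\<close>.

  For \<open>t < j\<close> the word \<open>S\<^sub>j\<close> ends with \<open>T\<^sub>t = (a\<^sup>k\<^sup>+\<^sup>l b\<^sup>m\<^sup>+\<^sup>1)\<^sup>t a\<^sup>l w b\<^sup>m\<close> (\<open>S_tail t\<close>), and the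
  restriction of every colour class to \<open>T\<^sub>t\<close> is a suffix of \<open>w\<close>. Counting the letters \<open>a\<close> and
  \<open>b\<close> shows that these restrictions are \<open>t + 1\<close> copies of \<open>w\<close>, one copy of \<open>a\<^sup>l b\<^sup>m\<close> and empty
  words. Passing from \<open>T\<^sub>t\<close> to \<open>T\<^sub>t\<^sub>+\<^sub>1 = a\<^sup>k\<^sup>+\<^sup>l b\<^sup>m\<^sup>+\<^sup>1 T\<^sub>t\<close>, the colour of \<open>a\<^sup>l b\<^sup>m\<close> completes
  to \<open>w\<close> and a single new colour takes its place. Since \<open>S\<^sub>i\<close> ends neither with \<open>w\<close>, nor with
  \<open>a\<^sup>l b\<^sup>m\<close>, nor (for \<open>t < i\<close>) with \<open>a\<^sup>k b T\<^sub>t\<close>, induction on \<open>t\<close> shows that the part of \<open>T\<^sub>t\<close>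
  coloured by \<open>Q\<close> is either all of \<open>T\<^sub>t\<close> or empty. As \<open>S\<^sub>i\<close> does not end with \<open>T\<^sub>t\<close> for
  \<open>t \<ge> i\<close>, it is empty for \<open>t = j - 1\<close>, and the remaining prefix of \<open>S\<^sub>j\<close> is too short to
  spell \<open>S\<^sub>i\<close>.
\<close>

lemma replicate_snoc: "0 < n \<Longrightarrow> replicate n x = replicate (n - 1) x @ [x]"
  by (cases n) (simp_all add: replicate_append_same)

lemma count_list_replicate [simp]: "count_list (replicate n x) y = (if x = y then n else 0)"
  by (induction n) auto

lemma append_concat_replicate_rotate:
  "xs @ concat (replicate n (ys @ xs)) = concat (replicate n (xs @ ys)) @ xs"
  by (induction n) simp_all

lemma suffix_Cons_same_tail:
  assumes "suffix (x # zs) ws" and "suffix (y # zs) ws"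
  shows "x = y"
proof -
  have "suffix (x # zs) (y # zs) \<or> suffix (y # zs) (x # zs)"
    using suffix_same_cases[OF assms] .
  then show ?thesis
    by (auto simp: suffix_def Cons_eq_append_conv)
qed

lemma suffix_drop_length: "suffix xs ys \<Longrightarrow> drop (length ys - length xs) ys = xs"
  by (auto simp: suffix_def)

lemma card_Collect_eq_1E:
  assumes "card {x. P x} = 1"
  obtains y where "P y" and "\<And>x. P x \<Longrightarrow> x = y"
proof -
  from assms obtain y where "{x. P x} = {y}"
    by (auto simp: card_1_singleton_iff)
  then show thesis
    using that by blast
qed

lemma full_partial_count_eq:
  fixes t k l m F P :: nat
  assumes "Suc t * (k + l) + l \<le> (k + l) * F + l * P" and "Suc m * F + m * P \<le> Suc t * Suc m + m"
    and "l < k" and "0 < l" and "0 < m"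
  shows "F = Suc t \<and> P = 1"
proof -
  have "F \<le> Suc t"
  proof (rule ccontr)
    assume "\<not> F \<le> Suc t"
    then have "Suc m * Suc (Suc t) \<le> Suc m * F"
      by (intro mult_le_mono2) simp
    with assms(2) show False
      by (simp add: algebra_simps)
  qed
  moreover have "\<not> F < Suc t"
  proof
    assume "F < Suc t"
    define D where "D = Suc t - F"
    with \<open>F < Suc t\<close> have D: "Suc t = F + D" "0 < D"
      by simp_all
    have "D * (k + l) + l \<le> l * P"
      using assms(1) by (simp add: D algebra_simps)
    moreover have "m * P \<le> D * Suc m + m"
      using assms(2) by (simp add: D algebra_simps)
    \<comment> \<open>eliminating \<open>P\<close> leaves \<open>D m k \<le> D l\<close>, impossible as \<open>k > l\<close>\<close>
    ultimately have "m * (D * (k + l) + l) \<le> l * (D * Suc m + m)"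
      by (metis mult_le_mono2 mult.left_commute order.trans)
    then have "D * (m * k) \<le> D * l"
      by (simp add: algebra_simps)
    then have "m * k \<le> l"
      using \<open>0 < D\<close> by simp
    moreover have "k \<le> m * k"
      using \<open>0 < m\<close> by simp
    ultimately show False
      using \<open>l < k\<close> by simp
  qed
  ultimately have "F = Suc t"
    by simp
  moreover from this assms(1,4) have "1 \<le> P"
    by (simp add: algebra_simps)
  moreover from \<open>F = Suc t\<close> assms(2,5) have "P \<le> 1"
    by (simp add: algebra_simps)
  ultimately show ?thesis
    by simp
qed

section \<open>Shuffles\<close>

lemma append_in_shuffles_leftI: "zs \<in> shuffles xs ys \<Longrightarrow> us @ zs \<in> shuffles (us @ xs) ys"
  by (induction us) (simp_all add: Cons_in_shuffles_leftI)

lemma append_in_shuffles_rightI: "zs \<in> shuffles xs ys \<Longrightarrow> us @ zs \<in> shuffles xs (us @ ys)"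
  by (induction us) (simp_all add: Cons_in_shuffles_rightI)

lemma Cons_in_shuffle_leftI: "zs \<in> shuffle xs ys \<Longrightarrow> x # zs \<in> shuffle (x # xs) ys"
proof -
  assume "zs \<in> shuffle xs ys"
  then obtain us vs where uv: "length us = length vs" "1 \<le> length us" "xs = concat us" "ys = concat vs"
    "zs = concat (map2 (@) us vs)"
    unfolding shuffle_def by blast
  then obtain u us' v vs' where "us = u # us'" "vs = v # vs'"
    by (cases us; cases vs) auto
  with uv show ?thesis
    unfolding shuffle_def by (intro CollectI exI[of _ "(x # u) # us'"] exI[of _ vs]) simp
qed

lemma Cons_in_shuffle_rightI: "zs \<in> shuffle xs ys \<Longrightarrow> y # zs \<in> shuffle xs (y # ys)"
proof -
  assume "zs \<in> shuffle xs ys"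
  then obtain us vs where "length us = length vs" "1 \<le> length us" "xs = concat us" "ys = concat vs"
    "zs = concat (map2 (@) us vs)"
    unfolding shuffle_def by blast
  then show ?thesis
    unfolding shuffle_def by (intro CollectI exI[of _ "[] # us"] exI[of _ "[y] # vs"]) simp
qed

lemma shuffle_eq_shuffles: "shuffle xs ys = shuffles xs ys"
proof
  have "concat (map2 (@) us vs) \<in> shuffles (concat us) (concat vs)" if "length us = length vs" for us vs
    using that by (induction us vs rule: list_induct2)
      (simp_all add: append_in_shuffles_leftI append_in_shuffles_rightI)
  then show "shuffle xs ys \<subseteq> shuffles xs ys"
    unfolding shuffle_def by blast
next
  have "zs \<in> shuffles xs ys \<Longrightarrow> zs \<in> shuffle xs ys" for zs
  proof (induction zs arbitrary: xs ys)
    case Nil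
    then show ?case
      unfolding shuffle_def by (intro CollectI exI[of _ "[[]]"]) simp
  next
    case (Cons z zs)
    then show ?case
      by (cases xs; cases ys)
        (auto simp: Cons_in_shuffles_iff intro: Cons_in_shuffle_leftI Cons_in_shuffle_rightI)
  qed
  then show "shuffles xs ys \<subseteq> shuffle xs ys"
    by blast
qed

lemma ins_step_singleton_iff: "ins_step {w} u v \<longleftrightarrow> v \<in> shuffles u w"
  by (simp add: ins_step_def shuffle_eq_shuffles)

lemma in_shuffles_map_lift:
  "zs \<in> shuffles (map f xs) (map f ys) \<Longrightarrow> \<exists>zs'. map f zs' = zs \<and> zs' \<in> shuffles xs ys"
proof (induction zs arbitrary: xs ys)
  case (Cons z zs)
  show ?case
  proof (cases "xs \<noteq> [] \<and> f (hd xs) = z \<and> zs \<in> shuffles (map f (tl xs)) (map f ys)")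
    case True
    with Cons.IH obtain zs' where "map f zs' = zs" "zs' \<in> shuffles (tl xs) ys"
      by blast
    with True show ?thesis
      by (intro exI[of _ "hd xs # zs'"]) (auto simp: Cons_in_shuffles_iff)
  next
    case False
    with Cons.prems have ys: "ys \<noteq> [] \<and> f (hd ys) = z \<and> zs \<in> shuffles (map f xs) (map f (tl ys))"
      by (cases xs; cases ys) (auto simp: Cons_in_shuffles_iff)
    with Cons.IH obtain zs' where "map f zs' = zs" "zs' \<in> shuffles xs (tl ys)"
      by blast
    with ys show ?thesis
      by (intro exI[of _ "hd ys # zs'"]) (auto simp: Cons_in_shuffles_iff)
  qed
qed simp

lemma filter_in_shufflesI: "zs \<in> shuffles xs ys \<Longrightarrow> filter P zs \<in> shuffles (filter P xs) (filter P ys)"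
  using filter_shuffles by blast

lemma lang_eps_ins_step: "u \<in> lang_eps I \<Longrightarrow> ins_step I u v \<Longrightarrow> v \<in> lang_eps I"
  unfolding lang_eps_def by (simp add: rtranclp.rtrancl_into_rtrancl)

lemma lang_eps_insert_factor:
  assumes "u @ v \<in> lang_eps {w}"
  shows "u @ w @ v \<in> lang_eps {w}"
proof -
  have "w @ v \<in> shuffles v w"
    using append_in_shuffles_rightI[of v v "[]"] by simp
  then have "u @ w @ v \<in> shuffles (u @ v) w"
    by (rule append_in_shuffles_leftI)
  with assms show ?thesis
    by (simp add: lang_eps_ins_step ins_step_singleton_iff)
qed

section \<open>Colourings\<close>

definition colour_proj :: "(nat \<Rightarrow> bool) \<Rightarrow> ('a \<times> nat) list \<Rightarrow> 'a list" where
  "colour_proj Q cs = map fst (filter (\<lambda>x. Q (snd x)) cs)"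

abbreviation colour_class :: "nat \<Rightarrow> ('a \<times> nat) list \<Rightarrow> 'a list" where
  "colour_class c \<equiv> colour_proj (\<lambda>d. d = c)"

definition is_colouring :: "'a list \<Rightarrow> nat \<Rightarrow> ('a \<times> nat) list \<Rightarrow> bool" where
  "is_colouring w N cs \<longleftrightarrow> (\<forall>x\<in>set cs. snd x < N) \<and> (\<forall>c<N. colour_class c cs = w)"

lemma colour_proj_simps [simp]:
  "colour_proj Q [] = []"
  "colour_proj Q (x # cs) = (if Q (snd x) then fst x # colour_proj Q cs else colour_proj Q cs)"
  "colour_proj Q (cs @ ds) = colour_proj Q cs @ colour_proj Q ds"
  by (simp_all add: colour_proj_def)

lemma colour_proj_eq_Nil_iff: "colour_proj Q cs = [] \<longleftrightarrow> (\<forall>x\<in>set cs. \<not> Q (snd x))"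
  by (induction cs) auto

lemma colour_proj_eq_map_fst_iff: "colour_proj Q cs = map fst cs \<longleftrightarrow> (\<forall>x\<in>set cs. Q (snd x))"
proof
  assume "colour_proj Q cs = map fst cs"
  then have "length (filter (\<lambda>x. Q (snd x)) cs) = length cs"
    unfolding colour_proj_def using length_map by metis
  then show "\<forall>x\<in>set cs. Q (snd x)"
    using length_filter_less[of _ cs "\<lambda>x. Q (snd x)"] by (auto simp del: length_filter_less)
qed (simp add: colour_proj_def)

lemma colour_class_snd_neq_Nil: "x \<in> set cs \<Longrightarrow> colour_class (snd x) cs \<noteq> []"
  by (auto simp: colour_proj_eq_Nil_iff)

lemma colour_proj_two_colours:
  assumes "\<forall>x\<in>set cs. snd x = p \<or> snd x = q" and "p \<noteq> q"
  shows "colour_proj Q cs =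
    (if Q p then if Q q then map fst cs else colour_class p cs
     else if Q q then colour_class q cs else [])"
  using assms by (induction cs) auto

lemma suffix_colour_proj: "suffix ds cs \<Longrightarrow> suffix (colour_proj Q ds) (colour_proj Q cs)"
  by (auto simp: suffix_def)

lemma subseq_colour_proj: "subseq (colour_proj Q cs) (map fst cs)"
  unfolding colour_proj_def by (simp add: subseq_map)

lemma count_list_eq_sum_colour_classes:
  "\<forall>x\<in>set cs. snd x < N \<Longrightarrow> count_list (map fst cs) a = (\<Sum>c<N. count_list (colour_class c cs) a)"
proof (induction cs)
  case (Cons x cs)
  have "(\<Sum>c<N. count_list (colour_class c (x # cs)) a)
      = (\<Sum>c<N. (if c = snd x then of_bool (fst x = a) else 0) + count_list (colour_class c cs) a)"
    by (rule sum.cong) auto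
  also have "\<dots> = of_bool (fst x = a) + (\<Sum>c<N. count_list (colour_class c cs) a)"
    using Cons.prems by (simp add: sum.distrib)
  finally show ?case
    using Cons by simp
qed simp

lemma is_colouring_ins_step:
  assumes "is_colouring w N cs" and "ins_step {w} (map fst cs) v"
  shows "\<exists>cs'. map fst cs' = v \<and> is_colouring w (Suc N) cs' \<and> filter (\<lambda>x. snd x < N) cs' = cs"
proof -
  define cw where "cw = map (\<lambda>x. (x, N)) w"
  have "map fst cw = w"
    by (simp add: cw_def comp_def)
  with assms(2) obtain cs' where cs': "map fst cs' = v" "cs' \<in> shuffles cs cw"
    using in_shuffles_map_lift by (fastforce simp: ins_step_singleton_iff)
  have filter_cs': "filter P cs' = filter P cs" if "\<forall>x\<in>set cw. \<not> P x" for P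
    using filter_in_shufflesI[OF cs'(2), of P] that by (simp add: filter_False)
  have "colour_class N cs' = w"
  proof -
    have "filter (\<lambda>x. snd x = N) cs = []"
      using assms(1) by (auto simp: is_colouring_def filter_empty_conv)
    then have "filter (\<lambda>x. snd x = N) cs' = cw"
      using filter_in_shufflesI[OF cs'(2), of "\<lambda>x. snd x = N"] by (simp add: cw_def)
    then show ?thesis
      using \<open>map fst cw = w\<close> by (simp add: colour_proj_def)
  qed
  moreover have "colour_class c cs' = w" if "c < N" for c
    using filter_cs'[of "\<lambda>x. snd x = c"] assms(1) that
    by (simp add: colour_proj_def cw_def is_colouring_def)
  moreover have "\<forall>x\<in>set cs'. snd x < Suc N"
    using set_shuffles[OF cs'(2)] assms(1) by (auto simp: is_colouring_def cw_def)
  ultimately have "is_colouring w (Suc N) cs'"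
    by (auto simp: is_colouring_def less_Suc_eq)
  moreover have "filter (\<lambda>x. snd x < N) cs' = cs"
    using filter_cs'[of "\<lambda>x. snd x < N"] assms(1) by (simp add: cw_def is_colouring_def)
  ultimately show ?thesis
    using cs'(1) by blast
qed

lemma is_colouring_ins_star:
  assumes "ins_star {w} (map fst cs) v" and "is_colouring w N cs"
  shows "\<exists>N' cs'. N \<le> N' \<and> map fst cs' = v \<and> is_colouring w N' cs' \<and>
    filter (\<lambda>x. snd x < N) cs' = cs"
  using assms(1)
proof (induction rule: rtranclp_induct)
  case base
  have "filter (\<lambda>x. snd x < N) cs = cs"
    using assms(2) by (simp add: is_colouring_def)
  with assms(2) show ?case
    by blast
next
  case (step v v')
  then obtain N' cs' where cs': "N \<le> N'" "map fst cs' = v" "is_colouring w N' cs'"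
      "filter (\<lambda>x. snd x < N) cs' = cs"
    by blast
  with step.hyps(2) obtain cs'' where cs'': "map fst cs'' = v'" "is_colouring w (Suc N') cs''"
      "filter (\<lambda>x. snd x < N') cs'' = cs'"
    using is_colouring_ins_step by blast
  have "filter (\<lambda>x. snd x < N) cs'' = filter (\<lambda>x. snd x < N) (filter (\<lambda>x. snd x < N') cs'')"
    using cs'(1) by (auto intro!: filter_cong)
  with cs' cs'' show ?case
    by (intro exI[of _ "Suc N'"] exI[of _ cs'']) simp
qed

lemma lang_eps_ins_star_colouring:
  assumes "u \<in> lang_eps {w}" and "ins_star {w} u v"
  shows "\<exists>N Q cs. is_colouring w N cs \<and> map fst cs = v \<and> colour_proj Q cs = u"
proof -
  have "ins_star {w} (map fst []) u" "is_colouring w 0 []"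
    using assms(1) by (simp_all add: lang_eps_def is_colouring_def)
  then obtain N0 cs0 where "map fst cs0 = u" "is_colouring w N0 cs0"
    using is_colouring_ins_star by blast
  with assms(2) obtain N cs where "is_colouring w N cs" "map fst cs = v"
      "filter (\<lambda>x. snd x < N0) cs = cs0"
    using is_colouring_ins_star by blast
  then have "colour_proj (\<lambda>c. c < N0) cs = u"
    using \<open>map fst cs0 = u\<close> by (simp add: colour_proj_def)
  with \<open>is_colouring w N cs\<close> \<open>map fst cs = v\<close> show ?thesis
    by blast
qed

section \<open>The words \<open>w\<close> and \<open>S\<^sub>n\<close>\<close>

locale witness_words =
  fixes a b :: 'x and k l m :: nat
  assumes a_neq_b: "a \<noteq> b" and l_less_k: "l < k" and l_pos: "0 < l" and m_pos: "0 < m"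
begin

definition w :: "'x list" where
  "w = replicate k a @ [b] @ replicate l a @ replicate m b"

definition w_tail :: "'x list" where
  "w_tail = replicate l a @ replicate m b"

definition block :: "'x list" where
  "block = replicate (k + l) a @ replicate (Suc m) b"

definition S_tail :: "nat \<Rightarrow> 'x list" where
  "S_tail t = concat (replicate t block) @ replicate l a @ w @ replicate m b"

definition S :: "nat \<Rightarrow> 'x list" where
  "S n = replicate k a @ [b] @ replicate l a @
     replicate k a @ [b] @ replicate l a @ replicate m b @
     concat (replicate n (replicate k a @ replicate (m+1) b @ replicate l a)) @
     replicate k a @ [b] @ replicate l a @ replicate m b @ replicate m b"

lemma w_eq_b_w_tail: "w = replicate k a @ b # w_tail"
  by (simp add: w_def w_tail_def)

lemma w_w_tail_distinct: "w \<noteq> w_tail" "w \<noteq> []" "w_tail \<noteq> []"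
  using l_pos by (auto simp: w_def w_tail_def dest: arg_cong[of _ _ length])

lemma a_in_w_tail: "a \<in> set w_tail"
  using l_pos by (simp add: w_tail_def)

lemma S_tail_Suc: "S_tail (Suc t) = block @ S_tail t"
  by (simp add: S_tail_def)

lemma S_tail_add: "S_tail (d + t) = concat (replicate d block) @ S_tail t"
  by (simp add: S_tail_def replicate_add)

lemma S_tail_eq:
  "S_tail n = replicate l a @ concat (replicate n (replicate k a @ replicate (m+1) b @ replicate l a)) @
    w @ replicate m b"
proof -
  have "replicate l a @ replicate k a @ replicate (Suc m) b = block"
    by (simp add: block_def replicate_add[symmetric] add.commute)
  then show ?thesis
    using append_concat_replicate_rotate[of "replicate l a" n "replicate k a @ replicate (Suc m) b"]
    by (simp add: S_tail_def)
qed

lemma S_Suc: "S (Suc n) = replicate k a @ [b] @ replicate l a @ replicate k a @ [b] @ replicate l a @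
    replicate m b @ replicate k a @ replicate (Suc m) b @ S_tail n"
  by (simp add: S_def S_tail_eq w_def)

lemma length_S_Suc: "length (S (Suc n)) = 3 * k + 2 * l + 2 * m + 3 + length (S_tail n)"
  by (simp add: S_Suc)

lemma a_b_S_tail_Suc_in_shuffles:
  "replicate k a @ b # S_tail (Suc t) \<in> shuffles (replicate k a @ b # S_tail t) w"
proof -
  have "replicate m b @ S_tail t \<in> shuffles (S_tail t) (replicate m b)"
    using append_in_shuffles_rightI[of "S_tail t" "S_tail t" "[]"] by simp
  then have "b # replicate m b @ S_tail t \<in> shuffles (b # S_tail t) (replicate m b)"
    by (rule Cons_in_shuffles_leftI)
  then have "replicate l a @ b # replicate m b @ S_tail t \<in> shuffles (b # S_tail t) (replicate l a @ replicate m b)"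
    by (rule append_in_shuffles_rightI)
  then have "replicate k a @ replicate l a @ b # replicate m b @ S_tail t
      \<in> shuffles (replicate k a @ b # S_tail t) (replicate l a @ replicate m b)"
    by (rule append_in_shuffles_leftI)
  then have "(replicate k a @ [b]) @ replicate k a @ replicate l a @ b # replicate m b @ S_tail t
      \<in> shuffles (replicate k a @ b # S_tail t) ((replicate k a @ [b]) @ replicate l a @ replicate m b)"
    by (rule append_in_shuffles_rightI)
  then show ?thesis
    by (simp add: S_tail_Suc block_def w_def replicate_add)
qed

lemma a_b_S_tail_in_lang_eps: "replicate k a @ b # S_tail t \<in> lang_eps {w}"
proof (induction t)
  case 0
  have "[] @ w @ [] \<in> lang_eps {w}"
    by (rule lang_eps_insert_factor) (simp add: lang_eps_def)
  then have "(replicate k a @ b # replicate l a) @ replicate m b \<in> lang_eps {w}"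
    by (simp add: w_def)
  then have "(replicate k a @ b # replicate l a) @ w @ replicate m b \<in> lang_eps {w}"
    by (rule lang_eps_insert_factor)
  then show ?case
    by (simp add: S_tail_def)
next
  case (Suc t)
  then show ?case
    using a_b_S_tail_Suc_in_shuffles lang_eps_ins_step by (metis ins_step_singleton_iff)
qed

lemma S_in_lang_eps: "S n \<in> lang_eps {w}"
proof -
  let ?u = "replicate k a @ b # replicate l a"
    and ?v = "concat (replicate n (replicate k a @ replicate (m+1) b @ replicate l a)) @ w @ replicate m b"
  have "?u @ ?v \<in> lang_eps {w}"
    using a_b_S_tail_in_lang_eps[of n] by (simp add: S_tail_eq)
  then have "?u @ w @ ?v \<in> lang_eps {w}"
    by (rule lang_eps_insert_factor)
  then show ?thesis
    by (simp add: S_def w_def)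
qed

lemma suffix_S_tail_mono: "t \<le> t' \<Longrightarrow> suffix (S_tail t) (S_tail t')"
  using S_tail_add[of "t' - t" t] by (simp add: suffix_appendI)

lemma suffix_S_Suc: "suffix (b # replicate k a @ replicate (Suc m) b @ S_tail n) (S (Suc n))"
  unfolding S_Suc suffix_def
  by (rule exI[of _ "replicate k a @ b # replicate l a @ replicate k a @ b # replicate l a @
      replicate (m - 1) b"]) (simp add: replicate_snoc[OF m_pos])

lemma suffix_S_tail_S: "suffix (S_tail n) (S (Suc n))"
  by (rule suffix_appendD[OF suffix_appendD[OF suffix_ConsD[OF suffix_S_Suc]]])

lemma suffix_b_b_append: "suffix (b # b # zs) (xs @ replicate (Suc m) b @ zs)"
  unfolding suffix_def
  by (rule exI[of _ "xs @ replicate (m - 1) b"]) (simp add: replicate_snoc[OF m_pos] replicate_app_Cons_same)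

lemma suffix_b_b_S_tail: "t < n \<Longrightarrow> suffix (b # b # S_tail t) (S n)"
proof -
  assume "t < n"
  then obtain n' where n: "n = Suc n'" and "t \<le> n'"
    by (cases n) auto
  show ?thesis
  proof (cases "t = n'")
    case True
    have "suffix (b # b # S_tail t) (b # replicate k a @ replicate (Suc m) b @ S_tail t)"
      using suffix_b_b_append[of _ "b # replicate k a"] by simp
    with True show ?thesis
      using suffix_S_Suc[of t] n by (blast intro: suffix_order.trans)
  next
    case False
    have "suffix (b # b # S_tail t) (S_tail (Suc t))"
      using suffix_b_b_append by (simp add: S_tail_Suc block_def)
    also have "suffix \<dots> (S_tail n')"
      using False \<open>t \<le> n'\<close> by (intro suffix_S_tail_mono) simp
    also have "suffix \<dots> (S n)"
      unfolding n by (rule suffix_S_tail_S)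
    finally show ?thesis .
  qed
qed

lemma suffix_b_replicate_b_S: "suffix (b # replicate m b) (S (Suc n))"
proof -
  have "suffix (b # replicate m b) (S_tail n)"
    unfolding suffix_def S_tail_def w_def
    by (rule exI[of _ "concat (replicate n block) @ replicate l a @ replicate k a @ b # replicate l a @
        replicate (m - 1) b"]) (simp add: replicate_snoc[OF m_pos])
  then show ?thesis
    using suffix_S_tail_S by (rule suffix_order.trans)
qed

text \<open>Each of the following words ends with \<open>a\<close> followed by a common tail that, in \<open>S\<^sub>n\<close>, is
  preceded by \<open>b\<close>.\<close>

lemma not_suffix_w: "\<not> suffix w (S (Suc n))"
proof
  assume "suffix w (S (Suc n))"
  moreover have "w = (replicate k a @ b # replicate (l - 1) a) @ a # replicate m b"
    by (simp add: w_def replicate_snoc[OF l_pos])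
  ultimately have "suffix (a # replicate m b) (S (Suc n))"
    by (metis suffix_appendD)
  from suffix_Cons_same_tail[OF this suffix_b_replicate_b_S] show False
    using a_neq_b by simp
qed

lemma not_suffix_w_tail: "\<not> suffix w_tail (S (Suc n))"
proof
  assume "suffix w_tail (S (Suc n))"
  moreover have "w_tail = replicate (l - 1) a @ a # replicate m b"
    by (simp add: w_tail_def replicate_snoc[OF l_pos])
  ultimately have "suffix (a # replicate m b) (S (Suc n))"
    by (metis suffix_appendD)
  from suffix_Cons_same_tail[OF this suffix_b_replicate_b_S] show False
    using a_neq_b by simp
qed

lemma not_suffix_a_b_S_tail: "t < n \<Longrightarrow> \<not> suffix (replicate k a @ b # S_tail t) (S n)"
proof
  assume "t < n" and "suffix (replicate k a @ b # S_tail t) (S n)"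
  moreover have "replicate k a @ b # S_tail t = replicate (k - 1) a @ a # b # S_tail t"
    using l_less_k by (simp add: replicate_snoc[of k])
  ultimately have "suffix (a # b # S_tail t) (S n)"
    by (metis suffix_appendD)
  from suffix_Cons_same_tail[OF this suffix_b_b_S_tail[OF \<open>t < n\<close>]] show False
    using a_neq_b by simp
qed

lemma not_suffix_S_tail: "Suc n \<le> t \<Longrightarrow> \<not> suffix (S_tail t) (S (Suc n))"
proof
  assume "Suc n \<le> t" and "suffix (S_tail t) (S (Suc n))"
  then have "suffix (S_tail (Suc n)) (S (Suc n))"
    using suffix_S_tail_mono suffix_order.trans by metis
  moreover have "S_tail (Suc n) = replicate (l - 1) a @ a # replicate k a @ replicate (Suc m) b @ S_tail n"
    by (simp add: S_tail_Suc block_def add.commute[of k l] replicate_add replicate_snoc[OF l_pos])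
  ultimately have "suffix (a # replicate k a @ replicate (Suc m) b @ S_tail n) (S (Suc n))"
    by (metis suffix_appendD)
  from suffix_Cons_same_tail[OF this suffix_S_Suc] show False
    using a_neq_b by simp
qed

lemma suffix_w_cases:
  assumes "suffix \<sigma> w"
  obtains (full) r where "r \<le> k" "\<sigma> = replicate r a @ b # w_tail"
  | (partial) r where "r \<le> l" "\<sigma> = replicate r a @ replicate m b"
  | (tail) s where "s \<le> m" "\<sigma> = replicate s b"
proof -
  from assms obtain n where \<sigma>: "\<sigma> = drop n w"
    by (metis suffix_def append_eq_conv_conj)
  consider "n \<le> k" | "k < n" "n \<le> Suc (k + l)" | "Suc (k + l) < n"
    by linarith
  then show thesis
  proof cases
    case 1
    then show thesis
      using full[of "k - n"] by (simp add: \<sigma> w_eq_b_w_tail)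
  next
    case 2
    then obtain d where "n = Suc (k + d)" "d \<le> l"
      using less_imp_Suc_add by fastforce
    then show thesis
      using partial[of "l - d"] by (simp add: \<sigma> w_def)
  next
    case 3
    then obtain d where "n = Suc (k + l + d)"
      using less_imp_Suc_add by fastforce
    then show thesis
      using tail[of "m - d"] by (simp add: \<sigma> w_def)
  qed
qed

lemma count_list_w: "count_list w a = k + l" "count_list w b = Suc m"
  using a_neq_b by (simp_all add: w_def)

lemma count_list_w_tail: "count_list w_tail a = l" "count_list w_tail b = m"
  using a_neq_b by (simp_all add: w_tail_def)

lemma count_list_S_tail:
  "count_list (S_tail t) a = Suc t * (k + l) + l" "count_list (S_tail t) b = Suc t * Suc m + m"
  using a_neq_b by (simp_all add: S_tail_def block_def count_list_concat sum_list_replicate count_list_w)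

text \<open>Among the suffixes of \<open>w\<close>, these recognise those of the forms \<open>a\<^sup>r b a\<^sup>l b\<^sup>m\<close> and
  \<open>a\<^sup>r b\<^sup>m\<close> with \<open>r > 0\<close>.\<close>

definition full_suffix :: "'x list \<Rightarrow> bool" where
  "full_suffix \<sigma> \<longleftrightarrow> count_list \<sigma> b = Suc m"

definition tail_suffix :: "'x list \<Rightarrow> bool" where
  "tail_suffix \<sigma> \<longleftrightarrow> count_list \<sigma> b = m \<and> a \<in> set \<sigma>"

lemma suffix_w_count_list_bounds:
  assumes "suffix \<sigma> w"
  shows "count_list \<sigma> a \<le> (k + l) * of_bool (full_suffix \<sigma>) + l * of_bool (tail_suffix \<sigma>) \<and>
    Suc m * of_bool (full_suffix \<sigma>) + m * of_bool (tail_suffix \<sigma>) \<le> count_list \<sigma> b \<and>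
    (count_list \<sigma> a = (k + l) * of_bool (full_suffix \<sigma>) + l * of_bool (tail_suffix \<sigma>) \<and>
     count_list \<sigma> b = Suc m * of_bool (full_suffix \<sigma>) + m * of_bool (tail_suffix \<sigma>) \<longrightarrow>
      \<sigma> \<in> {w, w_tail, []})"
  using assms
proof (cases rule: suffix_w_cases)
  case (full r)
  then have "count_list \<sigma> a = r + l" "count_list \<sigma> b = Suc m"
    using a_neq_b by (simp_all add: count_list_w_tail)
  moreover have "r = k \<Longrightarrow> \<sigma> = w"
    using full by (simp add: w_eq_b_w_tail)
  ultimately show ?thesis
    using full(1) by (simp add: full_suffix_def tail_suffix_def)
next
  case (partial r)
  then have "count_list \<sigma> a = r" "count_list \<sigma> b = m" "a \<in> set \<sigma> \<longleftrightarrow> 0 < r"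
    using a_neq_b by auto
  moreover have "r = l \<Longrightarrow> \<sigma> = w_tail"
    using partial by (simp add: w_tail_def)
  ultimately show ?thesis
    using partial(1) m_pos by (auto simp: full_suffix_def tail_suffix_def)
next
  case (tail s)
  then have "count_list \<sigma> a = 0" "count_list \<sigma> b = s" "a \<notin> set \<sigma>"
    using a_neq_b by (simp_all add: eq_commute[of b a])
  moreover from this have "\<not> full_suffix \<sigma>" "\<not> tail_suffix \<sigma>"
    using tail(1) by (simp_all add: full_suffix_def tail_suffix_def)
  ultimately show ?thesis
    using tail(2) by simp
qed

lemma full_suffix_tail_suffix_cases:
  "\<sigma> \<in> {w, w_tail, []} \<Longrightarrow> full_suffix \<sigma> \<longleftrightarrow> \<sigma> = w"
  "\<sigma> \<in> {w, w_tail, []} \<Longrightarrow> tail_suffix \<sigma> \<longleftrightarrow> \<sigma> = w_tail"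
  using w_w_tail_distinct a_in_w_tail
  by (auto simp: full_suffix_def tail_suffix_def count_list_w count_list_w_tail)

lemma colour_class_suffix_w:
  assumes "is_colouring w N cs" and "suffix ds cs" and "c < N"
  shows "suffix (colour_class c ds) w"
  using suffix_colour_proj[OF assms(2), of "\<lambda>d. d = c"] assms(1,3) by (simp add: is_colouring_def)

lemma S_tail_sum_count_list_colour_classes:
  assumes "is_colouring w N cs" and "suffix ds cs" and "map fst ds = S_tail t"
  shows "(\<Sum>c<N. count_list (colour_class c ds) a) = Suc t * (k + l) + l"
    and "(\<Sum>c<N. count_list (colour_class c ds) b) = Suc t * Suc m + m"
proof -
  have "\<forall>x\<in>set ds. snd x < N"
    using assms(1) set_mono_suffix[OF assms(2)] by (auto simp: is_colouring_def)
  from count_list_eq_sum_colour_classes[OF this, symmetric] show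
    "(\<Sum>c<N. count_list (colour_class c ds) a) = Suc t * (k + l) + l"
    "(\<Sum>c<N. count_list (colour_class c ds) b) = Suc t * Suc m + m"
    by (simp_all add: assms(3) count_list_S_tail)
qed

lemma S_tail_sum_full_tail_suffix:
  assumes "is_colouring w N cs" and "suffix ds cs" and "map fst ds = S_tail t"
  shows "(\<Sum>c<N. of_bool (full_suffix (colour_class c ds))) = Suc t"
    and "(\<Sum>c<N. of_bool (tail_suffix (colour_class c ds))) = (1 :: nat)"
proof -
  define F :: "nat \<Rightarrow> nat" where "F c = of_bool (full_suffix (colour_class c ds))" for c
  define P :: "nat \<Rightarrow> nat" where "P c = of_bool (tail_suffix (colour_class c ds))" for c
  note bounds = suffix_w_count_list_bounds[OF colour_class_suffix_w[OF assms(1,2)], folded F_def P_def]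
  have "Suc t * (k + l) + l = (\<Sum>c<N. count_list (colour_class c ds) a)"
    using S_tail_sum_count_list_colour_classes[OF assms] by simp
  also have "\<dots> \<le> (\<Sum>c<N. (k + l) * F c + l * P c)"
    using bounds by (intro sum_mono) simp
  also have "\<dots> = (k + l) * sum F {..<N} + l * sum P {..<N}"
    by (simp add: sum.distrib sum_distrib_left)
  finally have le_a: "Suc t * (k + l) + l \<le> (k + l) * sum F {..<N} + l * sum P {..<N}" .
  have "Suc m * sum F {..<N} + m * sum P {..<N} = (\<Sum>c<N. Suc m * F c + m * P c)"
    by (simp add: sum.distrib sum_distrib_left)
  also have "\<dots> \<le> (\<Sum>c<N. count_list (colour_class c ds) b)"
    using bounds by (intro sum_mono) simp
  also have "\<dots> = Suc t * Suc m + m"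
    using S_tail_sum_count_list_colour_classes[OF assms] by simp
  finally have le_b: "Suc m * sum F {..<N} + m * sum P {..<N} \<le> Suc t * Suc m + m" .
  from full_partial_count_eq[OF le_a le_b l_less_k l_pos m_pos]
  show "sum F {..<N} = Suc t" and "sum P {..<N} = 1"
    by simp_all
qed

lemma S_tail_colour_classes:
  assumes "is_colouring w N cs" and "suffix ds cs" and "map fst ds = S_tail t"
  shows "\<forall>c<N. colour_class c ds \<in> {w, w_tail, []}"
    and "card {c. c < N \<and> colour_class c ds = w} = Suc t"
    and "card {c. c < N \<and> colour_class c ds = w_tail} = 1"
proof -
  define \<sigma> where "\<sigma> c = colour_class c ds" for c
  define F :: "nat \<Rightarrow> nat" where "F c = of_bool (full_suffix (\<sigma> c))" for c
  define P :: "nat \<Rightarrow> nat" where "P c = of_bool (tail_suffix (\<sigma> c))" for c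
  note bounds = suffix_w_count_list_bounds[OF colour_class_suffix_w[OF assms(1,2)], folded \<sigma>_def F_def P_def]
  note sums = S_tail_sum_full_tail_suffix[OF assms, folded \<sigma>_def F_def P_def]
    S_tail_sum_count_list_colour_classes[OF assms, folded \<sigma>_def]
  have "count_list (\<sigma> c) a = (k + l) * F c + l * P c" if "c < N" for c
  proof (rule sum_mono_inv[of "\<lambda>c. count_list (\<sigma> c) a" "{..<N}" "\<lambda>c. (k + l) * F c + l * P c"])
    show "(\<Sum>c<N. count_list (\<sigma> c) a) = (\<Sum>c<N. (k + l) * F c + l * P c)"
      using sums by (simp add: sum.distrib sum_distrib_left[symmetric])
  qed (use bounds that in simp_all)
  moreover have "Suc m * F c + m * P c = count_list (\<sigma> c) b" if "c < N" for c
  proof (rule sum_mono_inv[of "\<lambda>c. Suc m * F c + m * P c" "{..<N}" "\<lambda>c. count_list (\<sigma> c) b"])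
    show "(\<Sum>c<N. Suc m * F c + m * P c) = (\<Sum>c<N. count_list (\<sigma> c) b)"
      using sums by (simp add: sum.distrib sum_distrib_left[symmetric])
  qed (use bounds that in simp_all)
  ultimately show classes: "\<forall>c<N. \<sigma> c \<in> {w, w_tail, []}"
    using bounds by simp
  then have "F c = of_bool (\<sigma> c = w)" "P c = of_bool (\<sigma> c = w_tail)" if "c < N" for c
    using that by (simp_all add: F_def P_def full_suffix_tail_suffix_cases)
  then have "sum F {..<N} = (\<Sum>c<N. of_bool (\<sigma> c = w))" "sum P {..<N} = (\<Sum>c<N. of_bool (\<sigma> c = w_tail))"
    by (auto intro: sum.cong)
  moreover have "{..<N} \<inter> {c. Q c} = {c. c < N \<and> Q c}" for Q :: "nat \<Rightarrow> bool"
    by auto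
  ultimately show "card {c. c < N \<and> \<sigma> c = w} = Suc t" and "card {c. c < N \<and> \<sigma> c = w_tail} = 1"
    using sums by simp_all
qed

lemma not_subseq_w_block: "\<not> subseq w block"
proof
  have "\<not> subseq [b, a] (replicate s b)" for s
    using a_neq_b by (induction s) (auto simp: subseq_singleton_left)
  then have not_b_a: "\<not> subseq [b, a] (replicate r a @ replicate s b)" for r s
    using a_neq_b by (induction r) simp_all
  assume "subseq w block"
  moreover have "subseq [b, a] w"
    using l_pos by (simp add: w_def subseq_singleton_left subseq_drop_many)
  ultimately have "subseq [b, a] block"
    by (rule subseq_order.trans[rotated])
  with not_b_a show False
    unfolding block_def by blast
qed

lemma block_colour_class_Nil:
  assumes "is_colouring w N cs" and "suffix (cb @ ds) cs" and "map fst cb = block" and "map fst ds = S_tail t"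
    and "c < N" and "colour_class c ds \<noteq> w_tail" and "colour_class c (cb @ ds) \<noteq> w_tail"
  shows "colour_class c cb = []"
proof -
  have "map fst (cb @ ds) = S_tail (Suc t)"
    using assms(3,4) by (simp add: S_tail_Suc)
  from S_tail_colour_classes(1)[OF assms(1,2) this] S_tail_colour_classes(1)[OF assms(1)
      suffix_appendD[OF assms(2)] assms(4)]
  have "colour_class c ds \<in> {w, []}" "colour_class c cb @ colour_class c ds \<in> {w, []}"
    using assms(5-7) by auto
  moreover have "colour_class c cb \<noteq> w"
    using not_subseq_w_block subseq_colour_proj[of _ cb] assms(3) by metis
  ultimately show ?thesis
    by auto
qed

lemma block_colour_classes:
  assumes "is_colouring w N cs" and "suffix (cb @ ds) cs" and "map fst cb = block" and "map fst ds = S_tail t"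
  obtains p q where "p \<noteq> q" and "colour_class p ds = w_tail" and "\<forall>x\<in>set cb. snd x = p \<or> snd x = q"
    and "colour_class p cb = replicate k a @ [b]" and "colour_class q cb = w_tail"
proof -
  have "map fst (cb @ ds) = S_tail (Suc t)"
    using assms(3,4) by (simp add: S_tail_Suc)
  note C0 = S_tail_colour_classes[OF assms(1) suffix_appendD[OF assms(2)] assms(4)]
    and C1 = S_tail_colour_classes[OF assms(1,2) this]
  obtain p where p: "p < N" "colour_class p ds = w_tail"
    and p_unique: "\<And>c. c < N \<Longrightarrow> colour_class c ds = w_tail \<Longrightarrow> c = p"
    using C0(3) by (elim card_Collect_eq_1E) blast
  obtain q where q: "q < N" "colour_class q (cb @ ds) = w_tail"
    and q_unique: "\<And>c. c < N \<Longrightarrow> colour_class c (cb @ ds) = w_tail \<Longrightarrow> c = q"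
    using C1(3) by (elim card_Collect_eq_1E) blast
  have colours: "\<forall>x\<in>set cb. snd x < N"
    using assms(1) set_mono_suffix[OF assms(2)] by (auto simp: is_colouring_def)
  have other: "colour_class c cb = []" if "c < N" "c \<noteq> p" "c \<noteq> q" for c
    using block_colour_class_Nil[OF assms that(1)] p_unique q_unique that by blast
  have two: "\<forall>x\<in>set cb. snd x = p \<or> snd x = q"
    using other colours colour_class_snd_neq_Nil by blast
  have "p \<noteq> q"
  proof
    assume "p = q"
    then have "colour_class p cb = []"
      using p(2) q(2) by simp
    moreover obtain x where "x \<in> set cb"
      using assms(3) by (cases cb) (auto simp: block_def)
    ultimately show False
      using two colour_class_snd_neq_Nil \<open>p = q\<close> by metis
  qed
  have "colour_class p cb @ w_tail \<in> {w, w_tail, []}" "colour_class p cb @ w_tail \<noteq> w_tail"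
    using C1(1) p q_unique \<open>p \<noteq> q\<close> by auto
  then have "colour_class p cb @ w_tail = w"
    using w_w_tail_distinct by auto
  then have "colour_class p cb = replicate k a @ [b]"
    by (simp add: w_eq_b_w_tail)
  moreover have "colour_class q cb = w_tail"
  proof -
    have "colour_class q ds \<in> {w, []}"
      using C0(1) q p_unique \<open>p \<noteq> q\<close> by auto
    moreover have "length (colour_class q ds) \<le> length w_tail"
      using q(2) by (metis colour_proj_simps(3) le_add2 length_append)
    ultimately show ?thesis
      using q(2) by (auto simp: w_def w_tail_def)
  qed
  ultimately show thesis
    using that \<open>p \<noteq> q\<close> p(2) two by blast
qed

lemma colour_proj_S_tail_0:
  assumes "is_colouring w N cs" and "suffix ds cs" and "map fst ds = S_tail 0"
    and "suffix (colour_proj Q ds) (S (Suc n))"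
  shows "colour_proj Q ds \<in> {[], S_tail 0}"
proof -
  note C = S_tail_colour_classes[OF assms(1-3)]
  have "card {c. c < N \<and> colour_class c ds = w} = 1"
    using C(2) by simp
  then obtain e where e: "e < N" "colour_class e ds = w"
    and e_unique: "\<And>c. c < N \<Longrightarrow> colour_class c ds = w \<Longrightarrow> c = e"
    by (elim card_Collect_eq_1E) blast
  obtain p where p: "p < N" "colour_class p ds = w_tail"
    and p_unique: "\<And>c. c < N \<Longrightarrow> colour_class c ds = w_tail \<Longrightarrow> c = p"
    using C(3) by (elim card_Collect_eq_1E) blast
  have "e \<noteq> p"
    using e p w_w_tail_distinct by auto
  have "\<forall>x\<in>set ds. snd x = e \<or> snd x = p"
  proof
    fix x
    assume "x \<in> set ds"
    then have "snd x < N" "colour_class (snd x) ds \<noteq> []"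
      using assms(1) set_mono_suffix[OF assms(2)] colour_class_snd_neq_Nil[of x ds]
      by (auto simp: is_colouring_def)
    then show "snd x = e \<or> snd x = p"
      using C(1) e_unique p_unique by blast
  qed
  from colour_proj_two_colours[OF this \<open>e \<noteq> p\<close>, of Q]
  have "colour_proj Q ds \<in> {map fst ds, w, w_tail, []}"
    using e p by auto
  then show ?thesis
    using assms(3,4) not_suffix_w not_suffix_w_tail by auto
qed

lemma colour_proj_S_tail_Suc:
  assumes "is_colouring w N cs" and "suffix (cb @ ds) cs" and "map fst cb = block" and "map fst ds = S_tail t"
    and "suffix (colour_proj Q (cb @ ds)) (S (Suc n))" and "colour_proj Q ds \<in> {[], S_tail t}"
  shows "colour_proj Q (cb @ ds) \<in> {[], S_tail (Suc t)}"
proof -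
  obtain p q where "p \<noteq> q" and p: "colour_class p ds = w_tail" and two: "\<forall>x\<in>set cb. snd x = p \<or> snd x = q"
    and cb_p: "colour_class p cb = replicate k a @ [b]" and cb_q: "colour_class q cb = w_tail"
    using block_colour_classes[OF assms(1-4)] .
  from p obtain x where x: "x \<in> set ds" "snd x = p"
    using w_w_tail_distinct(3) colour_proj_eq_Nil_iff[of "\<lambda>d. d = p" ds] by auto
  note cb_proj = colour_proj_two_colours[OF two \<open>p \<noteq> q\<close>, of Q]
  have suffix_ds: "suffix (colour_proj Q ds) (S (Suc n))"
    using assms(5) suffix_appendD by simp
  from assms(6) show ?thesis
  proof
    assume ds_out: "colour_proj Q ds = []"
    then have "\<not> Q p"
      using x colour_proj_eq_Nil_iff by blast
    then show ?thesis
      using assms(5) ds_out cb_proj cb_q not_suffix_w_tail by (auto split: if_splits)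
  next
    assume "colour_proj Q ds \<in> {S_tail t}"
    then have ds_in: "colour_proj Q ds = S_tail t"
      by simp
    then have "\<forall>y\<in>set ds. Q (snd y)"
      using assms(4) colour_proj_eq_map_fst_iff by metis
    with x have "Q p"
      by auto
    have "t < Suc n"
    proof (rule ccontr)
      assume "\<not> t < Suc n"
      then show False
        using not_suffix_S_tail[of n t] suffix_ds ds_in by simp
    qed
    have "colour_proj Q cb = (if Q q then block else replicate k a @ [b])"
      using cb_proj \<open>Q p\<close> cb_p assms(3) by simp
    then show ?thesis
      using assms(5) ds_in not_suffix_a_b_S_tail[OF \<open>t < Suc n\<close>]
      by (simp add: S_tail_Suc split: if_splits)
  qed
qed

definition coloured_S_tail :: "('x \<times> nat) list \<Rightarrow> nat \<Rightarrow> ('x \<times> nat) list" where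
  "coloured_S_tail cs t = drop (length cs - length (S_tail t)) cs"

lemma map_fst_coloured_S_tail:
  assumes "map fst cs = S j" and "t < j"
  shows "map fst (coloured_S_tail cs t) = S_tail t"
proof -
  have "suffix (S_tail t) (map fst cs)"
    using suffix_b_b_S_tail[OF assms(2)] assms(1) by (metis suffix_ConsD)
  then show ?thesis
    unfolding coloured_S_tail_def drop_map[symmetric] by (metis length_map suffix_drop_length)
qed

lemma coloured_S_tail_Suc:
  assumes "map fst cs = S j" and "Suc t < j"
  shows "coloured_S_tail cs (Suc t) = take (length block) (coloured_S_tail cs (Suc t)) @ coloured_S_tail cs t"
proof -
  have "length (S_tail (Suc t)) \<le> length cs"
    using map_fst_coloured_S_tail[OF assms] by (metis coloured_S_tail_def length_drop length_map diff_le_self)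
  then have "drop (length block) (coloured_S_tail cs (Suc t)) = coloured_S_tail cs t"
    by (simp add: coloured_S_tail_def S_tail_Suc add.commute)
  then show ?thesis
    by (metis append_take_drop_id)
qed

lemma colour_proj_coloured_S_tail:
  assumes "is_colouring w N cs" and "map fst cs = S j" and "suffix (colour_proj Q cs) (S (Suc n))"
    and "t < j"
  shows "colour_proj Q (coloured_S_tail cs t) \<in> {[], S_tail t}"
proof -
  have suffix_cs: "suffix (coloured_S_tail cs t) cs" for t
    unfolding coloured_S_tail_def by (rule suffix_drop)
  have proj_suffix: "suffix (colour_proj Q (coloured_S_tail cs t)) (S (Suc n))" for t
    using suffix_colour_proj[OF suffix_cs] assms(3) by (rule suffix_order.trans)
  show ?thesis
    using assms(4)
  proof (induction t)
    case 0
    then show ?case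
      using colour_proj_S_tail_0[OF assms(1) suffix_cs map_fst_coloured_S_tail[OF assms(2)] proj_suffix]
      by simp
  next
    case (Suc t)
    let ?cb = "take (length block) (coloured_S_tail cs (Suc t))"
    have "map fst ?cb = block"
      using map_fst_coloured_S_tail[OF assms(2) Suc.prems] by (simp add: take_map[symmetric] S_tail_Suc)
    with Suc show ?case
      using colour_proj_S_tail_Suc[OF assms(1) _ _ map_fst_coloured_S_tail[OF assms(2)], of ?cb t Q n]
        proj_suffix coloured_S_tail_Suc[OF assms(2) Suc.prems] suffix_cs
      by (metis Suc_lessD)
  qed
qed

lemma colour_proj_neq_S:
  assumes "is_colouring w N cs" and "map fst cs = S j" and "0 < i" and "i < j"
  shows "colour_proj Q cs \<noteq> S i"
proof
  assume proj: "colour_proj Q cs = S i"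
  obtain n where i: "i = Suc n"
    using assms(3) by (cases i) auto
  obtain j' where j: "j = Suc j'" and "i \<le> j'"
    using assms(4) by (cases j) auto
  have "colour_proj Q (coloured_S_tail cs j') \<in> {[], S_tail j'}"
    using colour_proj_coloured_S_tail[OF assms(1,2), of Q n j'] proj i j by simp
  moreover have "suffix (colour_proj Q (coloured_S_tail cs j')) (S i)"
    unfolding proj[symmetric] coloured_S_tail_def by (rule suffix_colour_proj[OF suffix_drop])
  ultimately have "colour_proj Q (coloured_S_tail cs j') = []"
    using not_suffix_S_tail[of n j'] \<open>i \<le> j'\<close> i by auto
  then have "S i = colour_proj Q (take (length cs - length (S_tail j')) cs)"
    using proj by (metis append_Nil2 append_take_drop_id colour_proj_simps(3) coloured_S_tail_def)
  then have "length (S i) \<le> length (take (length cs - length (S_tail j')) cs)"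
    unfolding colour_proj_def by (metis length_filter_le length_map)
  also have "\<dots> \<le> length (S j) - length (S_tail j')"
    using assms(2) by (metis length_map length_take min.cobounded2)
  finally show False
    using length_S_Suc[of n] length_S_Suc[of j'] i j by (simp add: S_tail_def w_def)
qed

end

theorem proposition3:
  fixes a b :: 'x and k l m :: nat
  assumes "a \<noteq> b" and "k > l" and "l \<ge> 1" and "m \<ge> 1"
  defines "w \<equiv> replicate k a @ [b] @ replicate l a @ replicate m b"
  defines "S \<equiv> (\<lambda>n::nat. replicate k a @ [b] @ replicate l a @
                 replicate k a @ [b] @ replicate l a @ replicate m b @
                 concat (replicate n (replicate k a @ replicate (m+1) b @ replicate l a)) @
                 replicate k a @ [b] @ replicate l a @ replicate m b @ replicate m b)"
  shows "(\<forall>n\<ge>1. S n \<in> lang_eps {w})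
         \<and> (\<forall>i j. 1 \<le> i \<longrightarrow> i < j \<longrightarrow> \<not> ins_star {w} (S i) (S j))
         \<and> \<not> wqo_on_set (ins_star {w}) (lang_eps {w})"
proof -
  interpret W: witness_words a b k l m
    using assms(1-4) by unfold_locales simp_all
  have w: "w = W.w" and S: "S = W.S"
    by (simp_all add: w_def W.w_def S_def W.S_def fun_eq_iff)
  have in_lang: "S n \<in> lang_eps {w}" for n
    unfolding w S by (rule W.S_in_lang_eps)
  have antichain: "\<not> ins_star {w} (S i) (S j)" if "1 \<le> i" and "i < j" for i j
  proof
    assume "ins_star {w} (S i) (S j)"
    then obtain N Q cs where "is_colouring w N cs" and "map fst cs = S j" and "colour_proj Q cs = S i"
      using lang_eps_ins_star_colouring[OF in_lang] by blast
    with W.colour_proj_neq_S that show False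
      unfolding w S by simp
  qed
  have "\<not> wqo_on_set (ins_star {w}) (lang_eps {w})"
    unfolding wqo_on_set_def
  proof
    assume "\<forall>s :: nat \<Rightarrow> 'x list. (\<forall>n. s n \<in> lang_eps {w}) \<longrightarrow> (\<exists>i j. i < j \<and> ins_star {w} (s i) (s j))"
    from this[rule_format, of "\<lambda>n. S (Suc n)"] obtain i j
      where "i < j" and "ins_star {w} (S (Suc i)) (S (Suc j))"
      using in_lang by blast
    with antichain show False
      by simp
  qed
  with in_lang antichain show ?thesis
    by simp
qed

end
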